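(* A random joint choice rule $p$ on a finite set $X$ is consistent with state independent consumption dependent random utility if and only if it satisfies complete monotonicity, marginality, and choice set independence.
   Context: $X$ is finite, $\mathcal{X}$ the nonempty subsets of $X$, $\mathcal{L}(X)$ the linear orders on $X$, $N(x,A)=\{\succ: x\succ y\ \forall y\in A\setminus\{x\}\}$. A random joint choice rule assigns to each $A,B\in\mathcal{X}$ and $(x,y)\in A\times B$ a number $p(x,y,A,B)\ge0$ with $\sum_{x\in A}\sum_{y\in B}p(x,y,A,B)=1$. Its Möbius inverse $q$ is defined by $p(x,y,A,B)=\sum_{A\subseteq A'\subseteq X}\sum_{B\subseteq B'\subseteq X}q(x,y,A',B')$. A state independent transition function is a map $x\mapsto t(x)\in\Delta(\mathcal{L}(X))$ (a transition function not depending on the preference input), with $t_{\succ'}(x)$ the probability of $\succ'$. $p$ is consistent with state independent consumption dependent random utility if there exist $\nu\in\Delta(\mathcal{L}(X))$ and a state independent transition function $t$ with $p(x,y,A,B)=\sum_{\succ\in N(x,A)}\sum_{\succ'\in N(y,B)}\nu(\succ)t_{\succ'}(x)$ for all $A,B\in\mathcal{X}$, $(x,y)\in A\times B$. Complete monotonicity: $q(x,y,A,B)\ge0$ for all arguments. Marginality: for all $A,B,C\in\mathcal{X}$ and $x\in A$, $\sum_{y\in B}p(x,y,A,B)=\sum_{y\in C}p(x,y,A,C)$. Write $p(x,A)=\sum_{y\in X}p(x,y,A,X)$ (under marginality this equals $\sum_{y\in B}p(x,y,A,B)$ for any $B$). Choice set independence: for every $B\in\mathcal{X}$, $y\in B$,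 and all $A,A'\in\mathcal{X}$ containing $x$ with $p(x,A)>0$ and $p(x,A')>0$, $\frac{p(x,y,A,B)}{p(x,A)}=\frac{p(x,y,A',B)}{p(x,A')}$. *)

theory Defs
  imports Complex_Main
begin

definition nonempty_subsets :: "'a set \<Rightarrow> 'a set set" where
  "nonempty_subsets X = {A. A \<subseteq> X \<and> A \<noteq> {}}"

definition lin_orders :: "'a set \<Rightarrow> 'a rel set" where
  "lin_orders X = {r. strict_linear_order_on X r \<and> r \<subseteq> X \<times> X}"

definition N_set :: "'a set \<Rightarrow> 'a \<Rightarrow> 'a set \<Rightarrow> 'a rel set" where
  "N_set X x A = {r \<in> lin_orders X. \<forall>y \<in> A - {x}. (x, y) \<in> r}"

definition distr :: "'b set \<Rightarrow> ('b \<Rightarrow> real) set" where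
  "distr S = {f. (\<forall>s\<in>S. 0 \<le> f s) \<and> sum f S = 1}"

definition random_joint_choice_rule ::
  "'a set \<Rightarrow> ('a \<Rightarrow> 'a \<Rightarrow> 'a set \<Rightarrow> 'a set \<Rightarrow> real) \<Rightarrow> bool" where
  "random_joint_choice_rule X p \<longleftrightarrow>
     (\<forall>A \<in> nonempty_subsets X. \<forall>B \<in> nonempty_subsets X.
        (\<forall>x\<in>A. \<forall>y\<in>B. 0 \<le> p x y A B) \<and>
        (\<Sum>x\<in>A. \<Sum>y\<in>B. p x y A B) = 1)"

text \<open>Moebius inverse q of p (explicit inversion formula of
  p(x,y,A,B) = sum over A \<subseteq> A' \<subseteq> X, B \<subseteq> B' \<subseteq> X of q(x,y,A',B')).\<close>
definition mobius_inv ::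
  "'a set \<Rightarrow> ('a \<Rightarrow> 'a \<Rightarrow> 'a set \<Rightarrow> 'a set \<Rightarrow> real) \<Rightarrow> 'a \<Rightarrow> 'a \<Rightarrow> 'a set \<Rightarrow> 'a set \<Rightarrow> real" where
  "mobius_inv X p x y A B =
     (\<Sum>A' \<in> {A'. A \<subseteq> A' \<and> A' \<subseteq> X}. \<Sum>B' \<in> {B'. B \<subseteq> B' \<and> B' \<subseteq> X}.
        (-1) ^ (card (A' - A) + card (B' - B)) * p x y A' B')"

definition state_indep_cdru ::
  "'a set \<Rightarrow> ('a \<Rightarrow> 'a \<Rightarrow> 'a set \<Rightarrow> 'a set \<Rightarrow> real) \<Rightarrow> bool" where
  "state_indep_cdru X p \<longleftrightarrow>
     (\<exists>(\<nu> :: 'a rel \<Rightarrow> real) (t :: 'a \<Rightarrow> 'a rel \<Rightarrow> real).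
        \<nu> \<in> distr (lin_orders X) \<and> (\<forall>x\<in>X. t x \<in> distr (lin_orders X)) \<and>
        (\<forall>A \<in> nonempty_subsets X. \<forall>B \<in> nonempty_subsets X. \<forall>x\<in>A. \<forall>y\<in>B.
           p x y A B = (\<Sum>r \<in> N_set X x A. \<Sum>r' \<in> N_set X y B. \<nu> r * t x r')))"

definition complete_monotonicity ::
  "'a set \<Rightarrow> ('a \<Rightarrow> 'a \<Rightarrow> 'a set \<Rightarrow> 'a set \<Rightarrow> real) \<Rightarrow> bool" where
  "complete_monotonicity X p \<longleftrightarrow>
     (\<forall>A \<in> nonempty_subsets X. \<forall>B \<in> nonempty_subsets X. \<forall>x\<in>A. \<forall>y\<in>B.
        0 \<le> mobius_inv X p x y A B)"

definition marginality ::
  "'a set \<Rightarrow> ('a \<Rightarrow> 'a \<Rightarrow> 'a set \<Rightarrow> 'a set \<Rightarrow> real) \<Rightarrow> bool" where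
  "marginality X p \<longleftrightarrow>
     (\<forall>A \<in> nonempty_subsets X. \<forall>B \<in> nonempty_subsets X. \<forall>C \<in> nonempty_subsets X. \<forall>x\<in>A.
        (\<Sum>y\<in>B. p x y A B) = (\<Sum>y\<in>C. p x y A C))"

definition marg_p ::
  "'a set \<Rightarrow> ('a \<Rightarrow> 'a \<Rightarrow> 'a set \<Rightarrow> 'a set \<Rightarrow> real) \<Rightarrow> 'a \<Rightarrow> 'a set \<Rightarrow> real" where
  "marg_p X p x A = (\<Sum>y\<in>X. p x y A X)"

definition choice_set_independence ::
  "'a set \<Rightarrow> ('a \<Rightarrow> 'a \<Rightarrow> 'a set \<Rightarrow> 'a set \<Rightarrow> real) \<Rightarrow> bool" where
  "choice_set_independence X p \<longleftrightarrow>
     (\<forall>B \<in> nonempty_subsets X. \<forall>y\<in>B. \<forall>x\<in>X.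
        \<forall>A \<in> nonempty_subsets X. \<forall>A' \<in> nonempty_subsets X.
          x \<in> A \<longrightarrow> x \<in> A' \<longrightarrow> marg_p X p x A > 0 \<longrightarrow> marg_p X p x A' > 0 \<longrightarrow>
          p x y A B / marg_p X p x A = p x y A' B / marg_p X p x A')"

end

(*
  Necessity: in a state independent model p(x,y,A,B) is the product of the probability that x
  tops A under nu and the probability that y tops B under t(x).  The two-variable Moebius inverse
  therefore factors into two one-variable Block--Marschak sums, each of which is the nonnegative
  mass of the orders in which the elements ranked weakly below the chosen alternative form exactly
  the given set; marginality and choice set independence are read off the factorisation.

  Sufficiency: the marginal p(x,A) has nonnegative Block--Marschak sums, so by Falmagne's theorem
  it is a random utility model nu.  Choice set independence gives p(x,y,A,B) = p(x,A) c_x(y,B)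
  with the conditional rule c_x taken at any A0 where p(x,A0) > 0; evaluating the Moebius inverse
  of p at a superset A1 of A0 with positive Block--Marschak sum shows that c_x has nonnegative
  Block--Marschak sums as well, and Falmagne's theorem turns it into t(x).

  Falmagne's theorem is proved by a flow argument: the Block--Marschak sum q(z,S) is a flow from
  S to S - {z} on the lattice of subsets, inflow equals outflow at every proper nonempty S, and
  the Markov chain ranking the alternatives from the top, picking z next out of the remaining set
  S with probability q(z,S) / outflow(S), induces the required distribution on orders.
*)

theory Submission
  imports Defs "HOL-Combinatorics.Multiset_Permutations"
begin

section \<open>Block--Marschak sums\<close>

definition block_marschak :: "'a set \<Rightarrow> ('a set \<Rightarrow> real) \<Rightarrow> 'a set \<Rightarrow> real" where
  "block_marschak X f A = (\<Sum>T | A \<subseteq> T \<and> T \<subseteq> X. (-1) ^ card (T - A) * f T)"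

lemma finite_supersets: "finite X \<Longrightarrow> finite {T. A \<subseteq> T \<and> T \<subseteq> X}"
  by (rule finite_subset[of _ "Pow X"]) auto

lemma sum_Pow_minus_one_power_card:
  assumes "finite V"
  shows "(\<Sum>U\<in>Pow V. (-1::real) ^ card U) = (if V = {} then 1 else 0)"
proof (cases "V = {}")
  case False
  then have "card {U. U \<subseteq> V \<and> {} \<subseteq> U \<and> even (card U)} = card {U. U \<subseteq> V \<and> {} \<subseteq> U \<and> odd (card U)}"
    using card_subsupersets_even_odd[OF assms] by blast
  then show ?thesis
    using False assms by (simp add: sum_alternating_cancels)
qed simp

lemma alternating_sum_interval_top:
  assumes "finite T" "A \<subseteq> T"
  shows "(\<Sum>S | A \<subseteq> S \<and> S \<subseteq> T. (-1::real) ^ card (T - S)) = (if A = T then 1 else 0)"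
proof -
  have "(\<Sum>S | A \<subseteq> S \<and> S \<subseteq> T. (-1::real) ^ card (T - S)) = (\<Sum>U\<in>Pow (T - A). (-1) ^ card U)"
    by (rule sum.reindex_bij_witness[where i = "\<lambda>U. T - U" and j = "\<lambda>S. T - S"]) (use assms in auto)
  then show ?thesis
    using assms by (simp add: sum_Pow_minus_one_power_card)
qed

lemma alternating_sum_interval_bottom:
  assumes "finite T" "A \<subseteq> T"
  shows "(\<Sum>S | A \<subseteq> S \<and> S \<subseteq> T. (-1::real) ^ card (S - A)) = (if A = T then 1 else 0)"
proof -
  have "(\<Sum>S | A \<subseteq> S \<and> S \<subseteq> T. (-1::real) ^ card (S - A)) = (\<Sum>U\<in>Pow (T - A). (-1) ^ card U)"
    by (rule sum.reindex_bij_witness[where i = "\<lambda>U. U \<union> A" and j = "\<lambda>S. S - A"]) (use assms in auto)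
  then show ?thesis
    using assms by (simp add: sum_Pow_minus_one_power_card)
qed

lemma sum_block_marschak_supersets:
  assumes "finite X" "A \<subseteq> X"
  shows "f A = (\<Sum>S | A \<subseteq> S \<and> S \<subseteq> X. block_marschak X f S)"
proof -
  let ?I = "{S. A \<subseteq> S \<and> S \<subseteq> X}"
  have fin: "finite ?I"
    using assms(1) by (rule finite_supersets)
  have "(\<Sum>S\<in>?I. block_marschak X f S) = (\<Sum>S\<in>?I. \<Sum>T | T \<in> ?I \<and> S \<subseteq> T. (-1) ^ card (T - S) * f T)"
    unfolding block_marschak_def by (rule sum.cong) (auto intro!: sum.cong)
  also have "\<dots> = (\<Sum>T\<in>?I. \<Sum>S | S \<in> ?I \<and> S \<subseteq> T. (-1) ^ card (T - S) * f T)"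
    by (rule sum.swap_restrict[OF fin fin])
  also have "\<dots> = (\<Sum>T\<in>?I. f T * (\<Sum>S | A \<subseteq> S \<and> S \<subseteq> T. (-1) ^ card (T - S)))"
    by (rule sum.cong) (auto simp: sum_distrib_left mult.commute intro!: sum.cong)
  also have "\<dots> = (\<Sum>T\<in>?I. if T = A then f A else 0)"
    by (rule sum.cong) (use assms in \<open>auto simp: alternating_sum_interval_top finite_subset split: if_splits\<close>)
  also have "\<dots> = f A"
    using fin assms by (simp add: sum.delta')
  finally show ?thesis ..
qed

lemma block_marschak_unique:
  assumes "finite X" "A \<subseteq> X"
    and f: "\<And>T. A \<subseteq> T \<Longrightarrow> T \<subseteq> X \<Longrightarrow> f T = (\<Sum>S | T \<subseteq> S \<and> S \<subseteq> X. g S)"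
  shows "block_marschak X f A = g A"
proof -
  let ?I = "{S. A \<subseteq> S \<and> S \<subseteq> X}"
  have fin: "finite ?I"
    using assms(1) by (rule finite_supersets)
  have "block_marschak X f A = (\<Sum>T\<in>?I. \<Sum>S | S \<in> ?I \<and> T \<subseteq> S. (-1) ^ card (T - A) * g S)"
    unfolding block_marschak_def by (rule sum.cong) (auto simp: f sum_distrib_left intro!: sum.cong)
  also have "\<dots> = (\<Sum>S\<in>?I. \<Sum>T | T \<in> ?I \<and> T \<subseteq> S. (-1) ^ card (T - A) * g S)"
    by (rule sum.swap_restrict[OF fin fin])
  also have "\<dots> = (\<Sum>S\<in>?I. g S * (\<Sum>T | A \<subseteq> T \<and> T \<subseteq> S. (-1) ^ card (T - A)))"
    by (rule sum.cong) (auto simp: sum_distrib_left mult.commute intro!: sum.cong)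
  also have "\<dots> = (\<Sum>S\<in>?I. if S = A then g A else 0)"
    by (rule sum.cong) (use assms in \<open>auto simp: alternating_sum_interval_bottom finite_subset split: if_splits\<close>)
  also have "\<dots> = g A"
    using fin assms by (simp add: sum.delta')
  finally show ?thesis .
qed

lemma block_marschak_sum:
  "block_marschak X (\<lambda>T. \<Sum>y\<in>Y. f y T) A = (\<Sum>y\<in>Y. block_marschak X (f y) A)"
  unfolding block_marschak_def by (simp add: sum_distrib_left sum.swap[of _ Y])

lemma mobius_inv_product:
  assumes "\<And>A' B'. A \<subseteq> A' \<Longrightarrow> A' \<subseteq> X \<Longrightarrow> B \<subseteq> B' \<Longrightarrow> B' \<subseteq> X \<Longrightarrow> p x y A' B' = f A' * g B'"
  shows "mobius_inv X p x y A B = block_marschak X f A * block_marschak X g B"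
  unfolding mobius_inv_def block_marschak_def sum_product
  by (intro sum.cong refl) (simp add: assms power_add)

lemma mobius_inv_full_right:
  "mobius_inv X p x y A X = block_marschak X (\<lambda>T. p x y T X) A"
proof -
  have "{B. X \<subseteq> B \<and> B \<subseteq> X} = {X}"
    by auto
  then show ?thesis
    unfolding mobius_inv_def block_marschak_def by simp
qed

lemma block_marschak_insert:
  assumes "finite X" "S \<subseteq> X" "z \<in> X - S"
  shows "block_marschak X f (insert z S) = - (\<Sum>T | S \<subseteq> T \<and> T \<subseteq> X \<and> z \<in> T. (-1) ^ card (T - S) * f T)"
proof -
  have "(-1) ^ card (T - insert z S) * f T = - ((-1) ^ card (T - S) * f T)"
    if "insert z S \<subseteq> T" "T \<subseteq> X" for T
  proof -
    have "finite (T - insert z S)"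
      using that(2) assms(1) finite_subset by blast
    moreover have "T - S = insert z (T - insert z S)"
      using that assms by auto
    ultimately have "card (T - S) = Suc (card (T - insert z S))"
      by (metis card_insert_disjoint Diff_iff insertI1)
    then show ?thesis
      by simp
  qed
  moreover have "{T. insert z S \<subseteq> T \<and> T \<subseteq> X} = {T. S \<subseteq> T \<and> T \<subseteq> X \<and> z \<in> T}"
    by auto
  ultimately show ?thesis
    unfolding block_marschak_def by (simp add: sum_negf[symmetric])
qed

section \<open>Rankings as permutations\<close>

definition rel_of_list :: "'a list \<Rightarrow> 'a rel" where
  "rel_of_list l = {(a, b). \<exists>l1 l2. l = l1 @ a # l2 \<and> b \<in> set l2}"

lemma rel_of_list_split:
  assumes "distinct (l1 @ x # l2)"
  shows "(x, y) \<in> rel_of_list (l1 @ x # l2) \<longleftrightarrow> y \<in> set l2"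
proof
  assume "(x, y) \<in> rel_of_list (l1 @ x # l2)"
  then obtain m1 m2 where m: "l1 @ x # l2 = m1 @ x # m2" "y \<in> set m2"
    unfolding rel_of_list_def by blast
  have "x \<notin> set l1" "x \<notin> set l2"
    using assms by auto
  then have "m2 = l2"
    using m(1) append_Cons_eq_iff[of x l1 l2 m1 m2] by simp
  with m show "y \<in> set l2"
    by simp
qed (auto simp: rel_of_list_def)

lemma trans_rel_of_list:
  assumes "distinct l"
  shows "trans (rel_of_list l)"
proof (rule transI)
  fix a b c
  assume ab: "(a, b) \<in> rel_of_list l" and bc: "(b, c) \<in> rel_of_list l"
  from ab obtain l1 l2 where l: "l = l1 @ a # l2" "b \<in> set l2"
    unfolding rel_of_list_def by blast
  from l(2) obtain u v where l2: "l2 = u @ b # v"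
    by (meson split_list)
  from bc have "c \<in> set v"
    using rel_of_list_split[of "l1 @ a # u" b v] l l2 assms by simp
  then show "(a, c) \<in> rel_of_list l"
    unfolding rel_of_list_def using l l2 by fastforce
qed

lemma total_on_rel_of_list: "total_on (set l) (rel_of_list l)"
proof (rule total_onI)
  fix a b
  assume a: "a \<in> set l" and b: "b \<in> set l" and "a \<noteq> b"
  from a obtain l1 l2 where l: "l = l1 @ a # l2"
    by (meson split_list)
  show "(a, b) \<in> rel_of_list l \<or> (b, a) \<in> rel_of_list l"
  proof (cases "b \<in> set l2")
    case True
    then show ?thesis
      using l unfolding rel_of_list_def by auto
  next
    case False
    with b l \<open>a \<noteq> b\<close> obtain u v where "l1 = u @ b # v"
      by (auto dest: split_list)
    then show ?thesis
      using l unfolding rel_of_list_def by fastforce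
  qed
qed

lemma rel_of_list_lin_orders:
  assumes "distinct l"
  shows "rel_of_list l \<in> lin_orders (set l)"
proof -
  have "irrefl (rel_of_list l)"
    unfolding irrefl_def rel_of_list_def using assms by auto
  moreover have "rel_of_list l \<subseteq> set l \<times> set l"
    unfolding rel_of_list_def by auto
  ultimately show ?thesis
    using trans_rel_of_list[OF assms] total_on_rel_of_list
    unfolding lin_orders_def strict_linear_order_on_def by auto
qed

lemma rel_of_list_permutation_lin_orders:
  "l \<in> permutations_of_set X \<Longrightarrow> rel_of_list l \<in> lin_orders X"
  using rel_of_list_lin_orders by (auto simp: permutations_of_set_def)

lemma rel_of_list_in_N_set_iff:
  assumes "l1 \<in> permutations_of_set (X - S)" "l2 \<in> permutations_of_set (S - {x})" "S \<subseteq> X" "x \<in> S" "x \<in> A"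
  shows "rel_of_list (l1 @ x # l2) \<in> N_set X x A \<longleftrightarrow> A \<subseteq> S"
proof -
  have perm: "l1 @ x # l2 \<in> permutations_of_set X" and "set l2 = S - {x}"
    using assms by (auto simp: permutations_of_set_def)
  moreover from perm have "rel_of_list (l1 @ x # l2) \<in> lin_orders X"
    by (rule rel_of_list_permutation_lin_orders)
  moreover from perm have "distinct (l1 @ x # l2)"
    by (simp add: permutations_of_set_def)
  ultimately show ?thesis
    using rel_of_list_split[of l1 x l2] assms(4,5) by (auto simp: N_set_def)
qed

lemma sum_permutations_of_set_Cons:
  assumes "finite U" "U \<noteq> {}"
  shows "(\<Sum>l\<in>permutations_of_set U. f l) = (\<Sum>z\<in>U. \<Sum>l\<in>permutations_of_set (U - {z}). f (z # l))"
proof -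
  have "(\<Sum>l\<in>permutations_of_set U. f l) = (\<Sum>z\<in>U. \<Sum>l\<in>(#) z ` permutations_of_set (U - {z}). f l)"
    unfolding permutations_of_set_nonempty[OF assms(2)]
    by (rule sum.UNION_disjoint) (use assms(1) in auto)
  then show ?thesis
    by (simp add: sum.reindex)
qed

lemma sum_permutations_of_set_rev:
  "(\<Sum>l\<in>permutations_of_set U. f (rev l)) = (\<Sum>l\<in>permutations_of_set U. f l)"
  using sum.reindex[of rev "permutations_of_set U" f] by (simp add: comp_def)

lemma sum_permutations_of_set_snoc:
  assumes "finite U" "U \<noteq> {}"
  shows "(\<Sum>l\<in>permutations_of_set U. f l) = (\<Sum>z\<in>U. \<Sum>l\<in>permutations_of_set (U - {z}). f (l @ [z]))"
proof -
  have "(\<Sum>l\<in>permutations_of_set U. f l) = (\<Sum>l\<in>permutations_of_set U. f (rev l))"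
    by (rule sum_permutations_of_set_rev[symmetric])
  also have "\<dots> = (\<Sum>z\<in>U. \<Sum>l\<in>permutations_of_set (U - {z}). f (rev l @ [z]))"
    by (simp add: sum_permutations_of_set_Cons[OF assms])
  also have "\<dots> = (\<Sum>z\<in>U. \<Sum>l\<in>permutations_of_set (U - {z}). f (l @ [z]))"
    by (simp only: sum_permutations_of_set_rev[where f = "\<lambda>l. f (l @ [_])"])
  finally show ?thesis .
qed

lemma bij_betw_split_permutations:
  assumes "x \<in> X"
  shows "bij_betw (\<lambda>(S, l1, l2). l1 @ x # l2)
    (SIGMA S:{S. x \<in> S \<and> S \<subseteq> X}. permutations_of_set (X - S) \<times> permutations_of_set (S - {x}))
    (permutations_of_set X)"
  (is "bij_betw ?g ?\<Sigma> _")
proof (rule bij_betw_imageI)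
  show "inj_on ?g ?\<Sigma>"
  proof (rule inj_onI)
    fix s s'
    assume "s \<in> ?\<Sigma>" "s' \<in> ?\<Sigma>" "?g s = ?g s'"
    moreover obtain S l1 l2 S' l1' l2' where "s = (S, l1, l2)" "s' = (S', l1', l2')"
      by (cases s, cases s') auto
    ultimately have "x \<notin> set l1" "x \<notin> set l1'" "x \<notin> set l2" "l1 @ x # l2 = l1' @ x # l2'"
      and "set l2 = S - {x}" "set l2' = S' - {x}" "x \<in> S" "x \<in> S'" "s = (S, l1, l2)" "s' = (S', l1', l2')"
      by (auto simp: permutations_of_set_def)
    then show "s = s'"
      using append_Cons_eq_iff[of x l1 l2 l1' l2'] by auto
  qed
  show "?g ` ?\<Sigma> = permutations_of_set X"
  proof
    show "?g ` ?\<Sigma> \<subseteq> permutations_of_set X"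
      by (auto simp: permutations_of_set_def)
    show "permutations_of_set X \<subseteq> ?g ` ?\<Sigma>"
    proof
      fix l
      assume l: "l \<in> permutations_of_set X"
      with assms obtain l1 l2 where l12: "l = l1 @ x # l2"
        by (auto simp: permutations_of_set_def dest: split_list)
      with l have "(insert x (set l2), l1, l2) \<in> ?\<Sigma>"
        by (auto simp: permutations_of_set_def)
      then show "l \<in> ?g ` ?\<Sigma>"
        by (rule rev_image_eqI) (simp add: l12)
    qed
  qed
qed

lemma sum_permutations_of_set_split:
  assumes "finite X" "x \<in> X"
  shows "(\<Sum>l\<in>permutations_of_set X. f l) =
    (\<Sum>S | x \<in> S \<and> S \<subseteq> X. \<Sum>l1\<in>permutations_of_set (X - S). \<Sum>l2\<in>permutations_of_set (S - {x}).
       f (l1 @ x # l2))"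
proof -
  have "(\<Sum>l\<in>permutations_of_set X. f l) =
      (\<Sum>(S, l1, l2)\<in>(SIGMA S:{S. x \<in> S \<and> S \<subseteq> X}. permutations_of_set (X - S) \<times> permutations_of_set (S - {x})).
        f (l1 @ x # l2))"
    using sum.reindex_bij_betw[OF bij_betw_split_permutations[OF assms(2)], of f]
    by (simp add: case_prod_unfold)
  also have "\<dots> = (\<Sum>S | x \<in> S \<and> S \<subseteq> X. \<Sum>(l1, l2)\<in>permutations_of_set (X - S) \<times> permutations_of_set (S - {x}).
      f (l1 @ x # l2))"
    by (rule sum.Sigma[symmetric]) (use assms(1) finite_supersets in auto)
  finally show ?thesis
    by (simp add: sum.cartesian_product)
qed

section \<open>Random utility models\<close>

definition rum_prob :: "'a set \<Rightarrow> ('a rel \<Rightarrow> real) \<Rightarrow> 'a \<Rightarrow> 'a set \<Rightarrow> real" where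
  "rum_prob X \<mu> x A = (\<Sum>r\<in>N_set X x A. \<mu> r)"

lemma finite_lin_orders: "finite X \<Longrightarrow> finite (lin_orders X)"
  by (rule finite_subset[of _ "Pow (X \<times> X)"]) (auto simp: lin_orders_def)

lemma finite_N_set: "finite X \<Longrightarrow> finite (N_set X x A)"
  by (rule finite_subset[OF _ finite_lin_orders]) (auto simp: N_set_def)

lemma lin_orders_has_top:
  assumes "finite B" "B \<noteq> {}" "B \<subseteq> X" "r \<in> lin_orders X"
  shows "\<exists>y\<in>B. r \<in> N_set X y B"
proof -
  have lin: "trans r" "total_on X r"
    using assms(4) by (auto simp: lin_orders_def strict_linear_order_on_def)
  from assms(1-3) have "\<exists>y\<in>B. \<forall>z\<in>B - {y}. (y, z) \<in> r"
  proof (induction B rule: finite_ne_induct)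
    case (insert b B)
    then obtain y where y: "y \<in> B" "\<forall>z\<in>B - {y}. (y, z) \<in> r"
      by auto
    show ?case
    proof (cases "(y, b) \<in> r")
      case True
      then show ?thesis
        using y by auto
    next
      case False
      have "b \<noteq> y" "b \<in> X" "y \<in> X"
        using insert y by auto
      with False lin(2) have "(b, y) \<in> r"
        unfolding total_on_def by blast
      with y lin(1) have "\<forall>z\<in>insert b B - {b}. (b, z) \<in> r"
        unfolding trans_def by blast
      then show ?thesis
        by blast
    qed
  qed simp
  then obtain y where "y \<in> B" "\<forall>z\<in>B - {y}. (y, z) \<in> r"
    by blast
  with assms(4) show ?thesis
    unfolding N_set_def by blast
qed

lemma N_set_disjoint:
  assumes "y \<in> B" "y' \<in> B" "y \<noteq> y'"
  shows "N_set X y B \<inter> N_set X y' B = {}"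
proof -
  have "(y, y') \<notin> r \<or> (y', y) \<notin> r" if "r \<in> lin_orders X" for r
  proof -
    have "trans r" "irrefl r"
      using that by (auto simp: lin_orders_def strict_linear_order_on_def)
    then show ?thesis
      unfolding trans_def irrefl_def by blast
  qed
  then show ?thesis
    using assms by (auto simp: N_set_def)
qed

lemma sum_rum_prob:
  assumes "finite X" "B \<subseteq> X" "B \<noteq> {}"
  shows "(\<Sum>y\<in>B. rum_prob X \<mu> y B) = sum \<mu> (lin_orders X)"
proof -
  have fB: "finite B"
    using assms(1,2) finite_subset by blast
  have "lin_orders X = (\<Union>y\<in>B. N_set X y B)"
    using lin_orders_has_top[OF fB assms(3,2)] by (auto simp: N_set_def)
  also have "sum \<mu> \<dots> = (\<Sum>y\<in>B. rum_prob X \<mu> y B)"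
    unfolding rum_prob_def
    by (rule sum.UNION_disjoint[OF fB]) (simp_all add: finite_N_set[OF assms(1)] N_set_disjoint)
  finally show ?thesis ..
qed

lemma block_marschak_rum_prob:
  assumes "finite X" "A \<subseteq> X" "x \<in> A"
  shows "block_marschak X (rum_prob X \<mu> x) A =
    (\<Sum>r | r \<in> lin_orders X \<and> insert x {z \<in> X. (x, z) \<in> r} = A. \<mu> r)"
proof (rule block_marschak_unique[OF assms(1,2)])
  fix T
  assume T: "A \<subseteq> T" "T \<subseteq> X"
  let ?below = "\<lambda>r. insert x {z \<in> X. (x, z) \<in> r}"
  have "?below ` N_set X x T \<subseteq> {S. T \<subseteq> S \<and> S \<subseteq> X}"
    using T assms(3) by (auto simp: N_set_def)
  then have "rum_prob X \<mu> x T = (\<Sum>S | T \<subseteq> S \<and> S \<subseteq> X. \<Sum>r \<in> {r \<in> N_set X x T. ?below r = S}. \<mu> r)"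
    unfolding rum_prob_def
    by (rule sum.group[OF finite_N_set[OF assms(1)] finite_supersets[OF assms(1)], symmetric])
  also have "\<dots> = (\<Sum>S | T \<subseteq> S \<and> S \<subseteq> X. \<Sum>r | r \<in> lin_orders X \<and> ?below r = S. \<mu> r)"
  proof (rule sum.cong)
    fix S
    assume "S \<in> {S. T \<subseteq> S \<and> S \<subseteq> X}"
    then have "{r \<in> N_set X x T. ?below r = S} = {r. r \<in> lin_orders X \<and> ?below r = S}"
      by (auto simp: N_set_def)
    then show "(\<Sum>r \<in> {r \<in> N_set X x T. ?below r = S}. \<mu> r) = (\<Sum>r | r \<in> lin_orders X \<and> ?below r = S. \<mu> r)"
      by simp
  qed simp
  finally show "rum_prob X \<mu> x T = (\<Sum>S | T \<subseteq> S \<and> S \<subseteq> X. \<Sum>r | r \<in> lin_orders X \<and> ?below r = S. \<mu> r)" .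
qed

lemma block_marschak_rum_prob_nonneg:
  assumes "finite X" "A \<subseteq> X" "x \<in> A" "\<And>r. r \<in> lin_orders X \<Longrightarrow> 0 \<le> \<mu> r"
  shows "0 \<le> block_marschak X (rum_prob X \<mu> x) A"
  unfolding block_marschak_rum_prob[OF assms(1-3)] by (rule sum_nonneg) (use assms(4) in auto)

section \<open>Falmagne's theorem\<close>

text \<open>The list \<open>l\<close> is ranked from the top, above the set \<open>T\<close> of alternatives ranked below it.\<close>

fun ranking_weight :: "('a \<Rightarrow> 'a set \<Rightarrow> real) \<Rightarrow> 'a list \<Rightarrow> 'a set \<Rightarrow> real" where
  "ranking_weight w [] T = 1"
| "ranking_weight w (z # l) T = w z (insert z (set l \<union> T)) * ranking_weight w l T"

lemma ranking_weight_append: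
  "ranking_weight w (l1 @ l2) T = ranking_weight w l1 (set l2 \<union> T) * ranking_weight w l2 T"
  by (induction l1) (auto simp: Un_assoc)

lemma ranking_weight_nonneg: "(\<And>z S. 0 \<le> w z S) \<Longrightarrow> 0 \<le> ranking_weight w l T"
  by (induction l) auto

lemma sum_ranking_weight_split_at:
  assumes "x \<in> S"
  shows "(\<Sum>l1\<in>permutations_of_set (X - S). \<Sum>l2\<in>permutations_of_set (S - {x}). ranking_weight w (l1 @ x # l2) {}) =
    (\<Sum>l1\<in>permutations_of_set (X - S). ranking_weight w l1 S) * w x S *
    (\<Sum>l2\<in>permutations_of_set (S - {x}). ranking_weight w l2 {})"
proof -
  have "ranking_weight w (l1 @ x # l2) {} = ranking_weight w l1 S * (w x S * ranking_weight w l2 {})"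
    if "l2 \<in> permutations_of_set (S - {x})" for l1 l2
  proof -
    have "insert x (set l2) = S"
      using that assms by (auto simp: permutations_of_set_def)
    then show ?thesis
      by (simp add: ranking_weight_append)
  qed
  then have "(\<Sum>l1\<in>permutations_of_set (X - S). \<Sum>l2\<in>permutations_of_set (S - {x}). ranking_weight w (l1 @ x # l2) {}) =
      (\<Sum>l1\<in>permutations_of_set (X - S). \<Sum>l2\<in>permutations_of_set (S - {x}).
        ranking_weight w l1 S * (w x S * ranking_weight w l2 {}))"
    by (intro sum.cong refl) simp
  then show ?thesis
    by (simp add: mult.assoc flip: sum_distrib_left sum_distrib_right)
qed

locale completely_monotone_choice =
  fixes X :: "'a set" and P :: "'a \<Rightarrow> 'a set \<Rightarrow> real"
  assumes finite_X: "finite X"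
    and sum_eq_1: "\<And>A. A \<subseteq> X \<Longrightarrow> A \<noteq> {} \<Longrightarrow> (\<Sum>x\<in>A. P x A) = 1"
    and block_marschak_nonneg: "\<And>x A. A \<subseteq> X \<Longrightarrow> x \<in> A \<Longrightarrow> 0 \<le> block_marschak X (P x) A"
begin

abbreviation q :: "'a \<Rightarrow> 'a set \<Rightarrow> real" where
  "q x S \<equiv> block_marschak X (P x) S"

definition outflow :: "'a set \<Rightarrow> real" where
  "outflow S = (\<Sum>y\<in>S. q y S)"

definition step_prob :: "'a \<Rightarrow> 'a set \<Rightarrow> real" where
  "step_prob z S = (if z \<in> S \<and> S \<subseteq> X then q z S / outflow S else 0)"

lemma outflow_nonneg: "S \<subseteq> X \<Longrightarrow> 0 \<le> outflow S"
  unfolding outflow_def by (rule sum_nonneg) (rule block_marschak_nonneg)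

lemma q_le_outflow: "S \<subseteq> X \<Longrightarrow> z \<in> S \<Longrightarrow> q z S \<le> outflow S"
  unfolding outflow_def
  by (rule member_le_sum) (use block_marschak_nonneg finite_subset finite_X in auto)

lemma step_prob_nonneg: "0 \<le> step_prob z S"
  unfolding step_prob_def using block_marschak_nonneg outflow_nonneg by auto

lemma outflow_mult_step_prob:
  assumes "S \<subseteq> X" "z \<in> S"
  shows "outflow S * step_prob z S = q z S"
proof (cases "outflow S = 0")
  case True
  then have "q z S = 0"
    using q_le_outflow[OF assms] block_marschak_nonneg[OF assms] by linarith
  with True show ?thesis
    by simp
qed (use assms in \<open>simp add: step_prob_def\<close>)

lemma outflow_X: "X \<noteq> {} \<Longrightarrow> outflow X = 1"
proof -
  assume "X \<noteq> {}"
  moreover have "{T. X \<subseteq> T \<and> T \<subseteq> X} = {X}"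
    by auto
  ultimately show ?thesis
    unfolding outflow_def block_marschak_def using sum_eq_1[of X] by simp
qed

lemma inflow_eq_outflow:
  assumes "S \<noteq> {}" "S \<subseteq> X" "S \<noteq> X"
  shows "(\<Sum>z\<in>X - S. q z (insert z S)) = outflow S"
proof -
  let ?I = "{T. S \<subseteq> T \<and> T \<subseteq> X}"
  let ?s = "\<lambda>T. (-1::real) ^ card (T - S)"
  have "(\<Sum>z\<in>X - S. q z (insert z S)) = - (\<Sum>z\<in>X - S. \<Sum>T | T \<in> ?I \<and> z \<in> T. ?s T * P z T)"
    using assms(2) finite_X by (simp add: block_marschak_insert sum_negf)
  also have "\<dots> = - (\<Sum>T\<in>?I. \<Sum>z | z \<in> X - S \<and> z \<in> T. ?s T * P z T)"
    using sum.swap_restrict[of "X - S" ?I] finite_X finite_supersets by simp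
  also have "\<dots> = - (\<Sum>T\<in>?I. ?s T * (\<Sum>z\<in>T - S. P z T))"
    by (intro arg_cong[where f = uminus] sum.cong) (auto simp: sum_distrib_left intro!: sum.cong)
  finally have inflow: "(\<Sum>z\<in>X - S. q z (insert z S)) = - (\<Sum>T\<in>?I. ?s T * (\<Sum>z\<in>T - S. P z T))" .
  have outflow: "outflow S = (\<Sum>T\<in>?I. ?s T * (\<Sum>y\<in>S. P y T))"
    unfolding outflow_def block_marschak_def by (simp add: sum_distrib_left sum.swap[of _ S])
  have "(\<Sum>y\<in>S. P y T) + (\<Sum>z\<in>T - S. P z T) = 1" if "T \<in> ?I" for T
  proof -
    have "finite T" "T \<noteq> {}"
      using that assms finite_X finite_subset by auto
    then have "(\<Sum>y\<in>S. P y T) + (\<Sum>z\<in>T - S. P z T) = (\<Sum>y\<in>T. P y T)"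
      using that sum.subset_diff[of S T "\<lambda>y. P y T"] by simp
    also have "\<dots> = 1"
      using that \<open>T \<noteq> {}\<close> by (simp add: sum_eq_1)
    finally show ?thesis .
  qed
  then have "outflow S - (\<Sum>z\<in>X - S. q z (insert z S)) = (\<Sum>T\<in>?I. ?s T)"
    unfolding inflow outflow by (simp add: sum.distrib[symmetric] distrib_left[symmetric])
  also have "\<dots> = 0"
    using alternating_sum_interval_bottom[OF finite_X assms(2)] assms(3) by simp
  finally show ?thesis
    by simp
qed

lemma outflow_remove_pos:
  assumes "S \<subseteq> X" "z \<in> S" "S \<noteq> {z}" "q z S > 0"
  shows "outflow (S - {z}) > 0"
proof -
  have "q z (insert z (S - {z})) \<le> (\<Sum>y\<in>X - (S - {z}). q y (insert y (S - {z})))"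
    using assms finite_X by (intro member_le_sum block_marschak_nonneg) auto
  also have "\<dots> = outflow (S - {z})"
    by (rule inflow_eq_outflow) (use assms in auto)
  finally show ?thesis
    using assms by (simp add: insert_absorb)
qed

lemma sum_weight_lower_rankings:
  assumes "S \<subseteq> X" "S = {} \<or> outflow S > 0"
  shows "(\<Sum>l\<in>permutations_of_set S. ranking_weight step_prob l {}) = 1"
  using finite_subset[OF assms(1) finite_X] assms
proof (induction S rule: finite_remove_induct)
  case (remove S)
  have "step_prob z S * (\<Sum>l\<in>permutations_of_set (S - {z}). ranking_weight step_prob l {}) = step_prob z S"
    if "z \<in> S" for z
  proof (cases "q z S > 0")
    case True
    then have "S - {z} = {} \<or> outflow (S - {z}) > 0"
      using outflow_remove_pos[of S z] remove.prems(1) that by auto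
    moreover have "S - {z} \<subseteq> X"
      using remove.prems(1) by auto
    ultimately show ?thesis
      using remove.IH[OF that] by simp
  next
    case False
    then have "q z S = 0"
      using block_marschak_nonneg[of S z] remove.prems(1) that by linarith
    then show ?thesis
      by (simp add: step_prob_def)
  qed
  moreover have "(\<Sum>l\<in>permutations_of_set (S - {z}). ranking_weight step_prob (z # l) {}) =
      step_prob z S * (\<Sum>l\<in>permutations_of_set (S - {z}). ranking_weight step_prob l {})"
    if "z \<in> S" for z
    unfolding sum_distrib_left
    by (rule sum.cong) (use that in \<open>auto simp: permutations_of_set_def insert_absorb\<close>)
  ultimately have "(\<Sum>l\<in>permutations_of_set (S - {z}). ranking_weight step_prob (z # l) {}) = step_prob z S"
    if "z \<in> S" for z
    using that by simp
  then have "(\<Sum>l\<in>permutations_of_set S. ranking_weight step_prob l {}) = (\<Sum>z\<in>S. step_prob z S)"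
    using remove.hyps by (simp add: sum_permutations_of_set_Cons)
  also have "\<dots> = 1"
    using remove.hyps remove.prems by (simp add: step_prob_def outflow_def sum_divide_distrib[symmetric])
  finally show ?case .
qed simp

lemma sum_weight_upper_rankings:
  assumes "U \<subseteq> X" "U \<noteq> X"
  shows "(\<Sum>l\<in>permutations_of_set U. ranking_weight step_prob l (X - U)) = outflow (X - U)"
  using finite_subset[OF assms(1) finite_X] assms
proof (induction U rule: finite_remove_induct)
  case empty
  then show ?case
    using outflow_X by simp
next
  case (remove U)
  have "(\<Sum>l\<in>permutations_of_set (U - {z}). ranking_weight step_prob (l @ [z]) (X - U)) =
      q z (insert z (X - U))" if "z \<in> U" for z
  proof -
    have X_U: "X - (U - {z}) = insert z (X - U)"
      using that remove.prems(1) by auto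
    have "U - {z} \<subseteq> X" "U - {z} \<noteq> X"
      using remove.prems by auto
    note IH = remove.IH[OF that this, unfolded X_U]
    have "ranking_weight step_prob (l @ [z]) (X - U) =
        ranking_weight step_prob l (insert z (X - U)) * step_prob z (insert z (X - U))" for l
      by (simp add: ranking_weight_append)
    then have "(\<Sum>l\<in>permutations_of_set (U - {z}). ranking_weight step_prob (l @ [z]) (X - U)) =
        outflow (insert z (X - U)) * step_prob z (insert z (X - U))"
      by (simp add: IH flip: sum_distrib_right)
    also have "\<dots> = q z (insert z (X - U))"
      using that remove.prems(1) by (intro outflow_mult_step_prob) auto
    finally show ?thesis .
  qed
  then have "(\<Sum>l\<in>permutations_of_set U. ranking_weight step_prob l (X - U)) =
      (\<Sum>z\<in>X - (X - U). q z (insert z (X - U)))"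
    using remove.hyps remove.prems(1) by (simp add: sum_permutations_of_set_snoc double_diff)
  also have "\<dots> = outflow (X - U)"
    using remove.hyps remove.prems by (intro inflow_eq_outflow) auto
  finally show ?case .
qed

lemma sum_weight_split_at:
  assumes "S \<subseteq> X" "x \<in> S"
  shows "(\<Sum>l1\<in>permutations_of_set (X - S). \<Sum>l2\<in>permutations_of_set (S - {x}).
      ranking_weight step_prob (l1 @ x # l2) {}) = q x S"
proof (cases "q x S > 0")
  case True
  have "S - {x} = {} \<or> outflow (S - {x}) > 0"
    using outflow_remove_pos[OF assms _ True] by auto
  then have "(\<Sum>l2\<in>permutations_of_set (S - {x}). ranking_weight step_prob l2 {}) = 1"
    using assms(1) by (intro sum_weight_lower_rankings) auto
  moreover have "X - S \<noteq> X"
    using assms by auto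
  then have "(\<Sum>l1\<in>permutations_of_set (X - S). ranking_weight step_prob l1 S) = outflow S"
    using sum_weight_upper_rankings[of "X - S"] assms(1) by (simp add: double_diff)
  ultimately show ?thesis
    using outflow_mult_step_prob[OF assms] by (simp add: sum_ranking_weight_split_at[OF assms(2)])
next
  case False
  then have "q x S = 0"
    using block_marschak_nonneg[OF assms] by linarith
  then show ?thesis
    by (simp add: sum_ranking_weight_split_at[OF assms(2)] step_prob_def)
qed

lemma sum_weight_N_set:
  assumes "A \<subseteq> X" "x \<in> A"
  shows "(\<Sum>l\<in>permutations_of_set X. if rel_of_list l \<in> N_set X x A then ranking_weight step_prob l {} else 0) =
    P x A"
proof -
  have "(\<Sum>l\<in>permutations_of_set X. if rel_of_list l \<in> N_set X x A then ranking_weight step_prob l {} else 0) =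
      (\<Sum>S | x \<in> S \<and> S \<subseteq> X. if A \<subseteq> S then q x S else 0)"
  proof -
    have "(\<Sum>l1\<in>permutations_of_set (X - S). \<Sum>l2\<in>permutations_of_set (S - {x}).
        if rel_of_list (l1 @ x # l2) \<in> N_set X x A then ranking_weight step_prob (l1 @ x # l2) {} else 0) =
        (if A \<subseteq> S then q x S else 0)"
      if S: "x \<in> S" "S \<subseteq> X" for S
      using sum_weight_split_at[OF S(2,1)] rel_of_list_in_N_set_iff[OF _ _ S(2,1) assms(2)]
      by (simp cong: sum.cong)
    moreover have "x \<in> X"
      using assms by auto
    ultimately show ?thesis
      unfolding sum_permutations_of_set_split[OF finite_X \<open>x \<in> X\<close>] by (intro sum.cong) auto
  qed
  also have "\<dots> = (\<Sum>S | A \<subseteq> S \<and> S \<subseteq> X. q x S)"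
  proof -
    have "{S. x \<in> S \<and> S \<subseteq> X \<and> A \<subseteq> S} = {S. A \<subseteq> S \<and> S \<subseteq> X}"
      using assms(2) by auto
    moreover have "finite {S. x \<in> S \<and> S \<subseteq> X}"
      using finite_supersets[OF finite_X, of "{x}"] by simp
    ultimately show ?thesis
      by (simp add: sum.inter_filter[symmetric])
  qed
  also have "\<dots> = P x A"
    using sum_block_marschak_supersets[OF finite_X assms(1)] by simp
  finally show ?thesis .
qed

definition rum :: "'a rel \<Rightarrow> real" where
  "rum r = (\<Sum>l | l \<in> permutations_of_set X \<and> rel_of_list l = r. ranking_weight step_prob l {})"

lemma sum_rum:
  assumes "R \<subseteq> lin_orders X"
  shows "sum rum R = (\<Sum>l\<in>permutations_of_set X. if rel_of_list l \<in> R then ranking_weight step_prob l {} else 0)"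
proof -
  let ?L = "{l \<in> permutations_of_set X. rel_of_list l \<in> R}"
  have "finite R"
    using assms finite_lin_orders[OF finite_X] finite_subset by blast
  have "sum rum R = (\<Sum>r\<in>R. \<Sum>l \<in> {l \<in> ?L. rel_of_list l = r}. ranking_weight step_prob l {})"
    unfolding rum_def by (intro sum.cong refl arg_cong[where f = "sum _"]) auto
  also have "\<dots> = (\<Sum>l\<in>?L. ranking_weight step_prob l {})"
    by (rule sum.group) (use \<open>finite R\<close> in auto)
  also have "\<dots> = (\<Sum>l\<in>permutations_of_set X. if rel_of_list l \<in> R then ranking_weight step_prob l {} else 0)"
    by (rule sum.inter_filter) simp
  finally show ?thesis .
qed

lemma rum_distr: "rum \<in> distr (lin_orders X)"
  unfolding distr_def
proof (intro CollectI conjI ballI)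
  fix r
  show "0 \<le> rum r"
    unfolding rum_def by (intro sum_nonneg ranking_weight_nonneg step_prob_nonneg)
next
  have "sum rum (lin_orders X) = (\<Sum>l\<in>permutations_of_set X. ranking_weight step_prob l {})"
    unfolding sum_rum[OF order.refl] by (rule sum.cong) (auto simp: rel_of_list_permutation_lin_orders)
  also have "\<dots> = 1"
    by (rule sum_weight_lower_rankings[OF order.refl]) (cases "X = {}", simp_all add: outflow_X)
  finally show "sum rum (lin_orders X) = 1" .
qed

lemma rum_prob_rum:
  assumes "A \<subseteq> X" "x \<in> A"
  shows "rum_prob X rum x A = P x A"
proof -
  have "N_set X x A \<subseteq> lin_orders X"
    by (auto simp: N_set_def)
  then show ?thesis
    unfolding rum_prob_def by (simp add: sum_rum sum_weight_N_set[OF assms])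
qed

end

lemma falmagne_rum_representation:
  assumes "finite X"
    and "\<And>A. A \<subseteq> X \<Longrightarrow> A \<noteq> {} \<Longrightarrow> (\<Sum>x\<in>A. P x A) = 1"
    and "\<And>x A. A \<subseteq> X \<Longrightarrow> x \<in> A \<Longrightarrow> 0 \<le> block_marschak X (P x) A"
  obtains \<nu> where "\<nu> \<in> distr (lin_orders X)" "\<And>x A. A \<subseteq> X \<Longrightarrow> x \<in> A \<Longrightarrow> P x A = rum_prob X \<nu> x A"
proof -
  interpret completely_monotone_choice X P
    using assms by unfold_locales
  show thesis
    using that rum_distr rum_prob_rum by simp
qed

section \<open>Necessity\<close>

lemma nonempty_subsets_iff [simp]: "A \<in> nonempty_subsets X \<longleftrightarrow> A \<subseteq> X \<and> A \<noteq> {}"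
  by (simp add: nonempty_subsets_def)

lemma state_indep_cdru_iff_rum_prob:
  "state_indep_cdru X p \<longleftrightarrow>
    (\<exists>\<nu> t. \<nu> \<in> distr (lin_orders X) \<and> (\<forall>x\<in>X. t x \<in> distr (lin_orders X)) \<and>
      (\<forall>A \<in> nonempty_subsets X. \<forall>B \<in> nonempty_subsets X. \<forall>x\<in>A. \<forall>y\<in>B.
        p x y A B = rum_prob X \<nu> x A * rum_prob X (t x) y B))"
  unfolding state_indep_cdru_def rum_prob_def by (simp only: sum_product)

locale state_indep_rum =
  fixes X :: "'a set" and p :: "'a \<Rightarrow> 'a \<Rightarrow> 'a set \<Rightarrow> 'a set \<Rightarrow> real"
    and \<nu> :: "'a rel \<Rightarrow> real" and t :: "'a \<Rightarrow> 'a rel \<Rightarrow> real"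
  assumes finite_X: "finite X"
    and \<nu>_distr: "\<nu> \<in> distr (lin_orders X)"
    and t_distr: "\<And>x. x \<in> X \<Longrightarrow> t x \<in> distr (lin_orders X)"
    and joint_eq_product: "\<And>A B x y. A \<subseteq> X \<Longrightarrow> A \<noteq> {} \<Longrightarrow> B \<subseteq> X \<Longrightarrow> B \<noteq> {} \<Longrightarrow> x \<in> A \<Longrightarrow> y \<in> B \<Longrightarrow>
      p x y A B = rum_prob X \<nu> x A * rum_prob X (t x) y B"
begin

lemma sum_joint_eq:
  assumes "A \<subseteq> X" "A \<noteq> {}" "B \<subseteq> X" "B \<noteq> {}" "x \<in> A"
  shows "(\<Sum>y\<in>B. p x y A B) = rum_prob X \<nu> x A"
proof -
  have "(\<Sum>y\<in>B. rum_prob X (t x) y B) = 1"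
    using sum_rum_prob[OF finite_X assms(3,4)] t_distr[of x] assms by (auto simp: distr_def)
  then show ?thesis
    using assms by (simp add: joint_eq_product sum_distrib_left[symmetric])
qed

lemma marginality: "marginality X p"
  unfolding marginality_def by (simp add: sum_joint_eq)

lemma choice_set_independence: "choice_set_independence X p"
  unfolding choice_set_independence_def
proof (intro ballI impI)
  fix B y x A A'
  assume B: "B \<in> nonempty_subsets X" "y \<in> B" and A: "A \<in> nonempty_subsets X" "A' \<in> nonempty_subsets X"
    and x: "x \<in> A" "x \<in> A'" and pos: "marg_p X p x A > 0" "marg_p X p x A' > 0"
  have "marg_p X p x A = rum_prob X \<nu> x A" "marg_p X p x A' = rum_prob X \<nu> x A'"
    unfolding marg_p_def using A x by (auto intro!: sum_joint_eq)
  with A B x pos show "p x y A B / marg_p X p x A = p x y A' B / marg_p X p x A'"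
    by (simp add: joint_eq_product)
qed

lemma complete_monotonicity: "complete_monotonicity X p"
  unfolding complete_monotonicity_def
proof (intro ballI)
  fix A B x y
  assume A: "A \<in> nonempty_subsets X" "x \<in> A" and B: "B \<in> nonempty_subsets X" "y \<in> B"
  have "mobius_inv X p x y A B = block_marschak X (rum_prob X \<nu> x) A * block_marschak X (rum_prob X (t x) y) B"
    using A B by (intro mobius_inv_product joint_eq_product) auto
  also have "0 \<le> \<dots>"
    using A B \<nu>_distr t_distr[of x]
    by (intro mult_nonneg_nonneg block_marschak_rum_prob_nonneg[OF finite_X]) (auto simp: distr_def)
  finally show "0 \<le> mobius_inv X p x y A B" .
qed

end

lemma state_indep_cdru_necessary:
  assumes "finite X" "state_indep_cdru X p"
  shows "complete_monotonicity X p \<and> marginality X p \<and> choice_set_independence X p"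
proof -
  obtain \<nu> t where "\<nu> \<in> distr (lin_orders X)" "\<forall>x\<in>X. t x \<in> distr (lin_orders X)"
    and "\<forall>A \<in> nonempty_subsets X. \<forall>B \<in> nonempty_subsets X. \<forall>x\<in>A. \<forall>y\<in>B.
      p x y A B = rum_prob X \<nu> x A * rum_prob X (t x) y B"
    using assms(2) unfolding state_indep_cdru_iff_rum_prob by blast
  then interpret rum: state_indep_rum X p \<nu> t
    using assms(1) by unfold_locales auto
  show ?thesis
    using rum.complete_monotonicity rum.marginality rum.choice_set_independence by blast
qed

section \<open>Sufficiency\<close>

locale marginal_joint_choice_rule =
  fixes X :: "'a set" and p :: "'a \<Rightarrow> 'a \<Rightarrow> 'a set \<Rightarrow> 'a set \<Rightarrow> real"
  assumes finite_X: "finite X"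
    and joint_rule: "random_joint_choice_rule X p"
    and marginal: "marginality X p"
begin

lemma joint_nonneg:
  assumes "A \<subseteq> X" "B \<subseteq> X" "x \<in> A" "y \<in> B"
  shows "0 \<le> p x y A B"
proof -
  have "A \<in> nonempty_subsets X" "B \<in> nonempty_subsets X"
    using assms by auto
  with joint_rule assms(3,4) show ?thesis
    unfolding random_joint_choice_rule_def by blast
qed

lemma sum_joint_eq_marg_p:
  assumes "A \<subseteq> X" "A \<noteq> {}" "B \<subseteq> X" "B \<noteq> {}" "x \<in> A"
  shows "(\<Sum>y\<in>B. p x y A B) = marg_p X p x A"
proof -
  have "A \<in> nonempty_subsets X" "B \<in> nonempty_subsets X" "X \<in> nonempty_subsets X"
    using assms by auto
  with marginal assms(5) show ?thesis
    unfolding marginality_def marg_p_def by blast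
qed

lemma marg_p_nonneg: "A \<subseteq> X \<Longrightarrow> x \<in> A \<Longrightarrow> 0 \<le> marg_p X p x A"
  unfolding marg_p_def by (intro sum_nonneg joint_nonneg) auto

lemma joint_le_marg_p:
  assumes "A \<subseteq> X" "B \<subseteq> X" "x \<in> A" "y \<in> B"
  shows "p x y A B \<le> marg_p X p x A"
proof -
  have "p x y A B \<le> (\<Sum>y\<in>B. p x y A B)"
    using assms finite_X finite_subset by (intro member_le_sum joint_nonneg) auto
  also have "\<dots> = marg_p X p x A"
    using assms by (intro sum_joint_eq_marg_p) auto
  finally show ?thesis .
qed

lemma sum_marg_p:
  assumes "A \<subseteq> X" "A \<noteq> {}"
  shows "(\<Sum>x\<in>A. marg_p X p x A) = 1"
proof -
  have "A \<in> nonempty_subsets X" "X \<in> nonempty_subsets X"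
    using assms by auto
  with joint_rule show ?thesis
    unfolding random_joint_choice_rule_def marg_p_def by blast
qed

lemma block_marschak_marg_p_nonneg:
  assumes "complete_monotonicity X p" "A \<subseteq> X" "x \<in> A"
  shows "0 \<le> block_marschak X (marg_p X p x) A"
proof -
  have "block_marschak X (marg_p X p x) A = (\<Sum>y\<in>X. mobius_inv X p x y A X)"
    unfolding marg_p_def block_marschak_sum mobius_inv_full_right ..
  also have "0 \<le> \<dots>"
  proof (rule sum_nonneg)
    have "A \<in> nonempty_subsets X" "X \<in> nonempty_subsets X"
      using assms by auto
    with assms(1,3) show "0 \<le> mobius_inv X p x y A X" if "y \<in> X" for y
      using that unfolding complete_monotonicity_def by blast
  qed
  finally show ?thesis .
qed

lemma joint_eq_marg_p_mult_conditional:
  assumes "choice_set_independence X p" "A0 \<subseteq> X" "x \<in> A0" "marg_p X p x A0 > 0"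
    and "A \<subseteq> X" "B \<subseteq> X" "x \<in> A" "y \<in> B"
  shows "p x y A B = marg_p X p x A * (p x y A0 B / marg_p X p x A0)"
proof (cases "marg_p X p x A > 0")
  case True
  have "A \<in> nonempty_subsets X" "A0 \<in> nonempty_subsets X" "B \<in> nonempty_subsets X" "x \<in> X"
    using assms by auto
  with assms(1,3,4,7,8) True have "p x y A B / marg_p X p x A = p x y A0 B / marg_p X p x A0"
    unfolding choice_set_independence_def by blast
  with True show ?thesis
    by (simp add: field_simps)
next
  case False
  then have "marg_p X p x A = 0"
    using marg_p_nonneg[OF assms(5,7)] by linarith
  with assms(5-8) show ?thesis
    using joint_le_marg_p[of A B x y] joint_nonneg[of A B x y] by simp
qed

lemma block_marschak_conditional_nonneg:
  assumes CM: "complete_monotonicity X p" and CSI: "choice_set_independence X p"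
    and A0: "A0 \<subseteq> X" "x \<in> A0" "marg_p X p x A0 > 0" and B: "B \<subseteq> X" "y \<in> B"
  shows "0 \<le> block_marschak X (\<lambda>B. p x y A0 B / marg_p X p x A0) B"
proof -
  have "0 < (\<Sum>S | A0 \<subseteq> S \<and> S \<subseteq> X. block_marschak X (marg_p X p x) S)"
    using A0 sum_block_marschak_supersets[OF finite_X A0(1), of "marg_p X p x"] by simp
  then obtain A1 where A1: "A0 \<subseteq> A1" "A1 \<subseteq> X" "block_marschak X (marg_p X p x) A1 > 0"
    by (metis (no_types, lifting) mem_Collect_eq not_less sum_nonpos)
  have "mobius_inv X p x y A1 B =
      block_marschak X (marg_p X p x) A1 * block_marschak X (\<lambda>B. p x y A0 B / marg_p X p x A0) B"
    using A0 A1 B by (intro mobius_inv_product joint_eq_marg_p_mult_conditional[OF CSI]) auto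
  moreover have "A1 \<in> nonempty_subsets X" "B \<in> nonempty_subsets X" "x \<in> A1"
    using A0 A1 B by auto
  with CM B(2) have "0 \<le> mobius_inv X p x y A1 B"
    unfolding complete_monotonicity_def by blast
  ultimately show ?thesis
    using A1(3) by (simp add: zero_le_mult_iff)
qed

lemma conditional_rum_exists:
  assumes CM: "complete_monotonicity X p" and CSI: "choice_set_independence X p"
    and A0: "A0 \<subseteq> X" "x \<in> A0" "marg_p X p x A0 > 0"
  obtains \<tau> where "\<tau> \<in> distr (lin_orders X)"
    "\<And>y B. B \<subseteq> X \<Longrightarrow> y \<in> B \<Longrightarrow> p x y A0 B / marg_p X p x A0 = rum_prob X \<tau> y B"
proof -
  have sum_eq_1: "(\<Sum>y\<in>B. p x y A0 B / marg_p X p x A0) = 1" if "B \<subseteq> X" "B \<noteq> {}" for B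
  proof -
    have "(\<Sum>y\<in>B. p x y A0 B) = marg_p X p x A0"
      using A0 that by (intro sum_joint_eq_marg_p) auto
    with A0(3) show ?thesis
      by (simp flip: sum_divide_distrib)
  qed
  show thesis
    using falmagne_rum_representation[OF finite_X sum_eq_1 block_marschak_conditional_nonneg[OF CM CSI A0]] that
    by metis
qed

lemma transition_exists:
  assumes CM: "complete_monotonicity X p" and CSI: "choice_set_independence X p"
  shows "\<exists>\<tau>. \<tau> \<in> distr (lin_orders X) \<and> (\<forall>A B y. A \<subseteq> X \<longrightarrow> B \<subseteq> X \<longrightarrow> x \<in> A \<longrightarrow> y \<in> B \<longrightarrow>
    p x y A B = marg_p X p x A * rum_prob X \<tau> y B)"
proof (cases "\<exists>A0. A0 \<subseteq> X \<and> x \<in> A0 \<and> marg_p X p x A0 > 0")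
  case True
  then obtain A0 where A0: "A0 \<subseteq> X" "x \<in> A0" "marg_p X p x A0 > 0"
    by blast
  obtain \<tau> where \<tau>: "\<tau> \<in> distr (lin_orders X)"
    and cond: "\<And>y B. B \<subseteq> X \<Longrightarrow> y \<in> B \<Longrightarrow> p x y A0 B / marg_p X p x A0 = rum_prob X \<tau> y B"
    by (rule conditional_rum_exists[OF CM CSI A0]) (rule that)
  show ?thesis
    using \<tau> joint_eq_marg_p_mult_conditional[OF CSI A0] cond by auto
next
  case False
  txt \<open>Then \<open>p x\<close> vanishes and any distribution will do.\<close>
  then have zero: "marg_p X p x A = 0" if "A \<subseteq> X" "x \<in> A" for A
    using marg_p_nonneg[OF that] that by (meson not_less order.antisym)
  obtain \<tau> where \<tau>: "\<tau> \<in> distr (lin_orders X)"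
    using falmagne_rum_representation[OF finite_X sum_marg_p block_marschak_marg_p_nonneg[OF CM]] by metis
  have "p x y A B = 0" if "A \<subseteq> X" "B \<subseteq> X" "x \<in> A" "y \<in> B" for A B y
    using joint_le_marg_p[OF that] joint_nonneg[OF that] zero[OF that(1,3)] by simp
  with \<tau> zero show ?thesis
    by (intro exI[of _ \<tau>]) simp
qed

lemma state_indep_cdru_sufficient:
  assumes CM: "complete_monotonicity X p" and CSI: "choice_set_independence X p"
  shows "state_indep_cdru X p"
proof -
  obtain \<nu> where \<nu>: "\<nu> \<in> distr (lin_orders X)"
    and marg_p_eq: "\<And>x A. A \<subseteq> X \<Longrightarrow> x \<in> A \<Longrightarrow> marg_p X p x A = rum_prob X \<nu> x A"
    using falmagne_rum_representation[OF finite_X sum_marg_p block_marschak_marg_p_nonneg[OF CM]] by metis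
  obtain t where t: "\<forall>x. t x \<in> distr (lin_orders X) \<and> (\<forall>A B y. A \<subseteq> X \<longrightarrow> B \<subseteq> X \<longrightarrow> x \<in> A \<longrightarrow> y \<in> B \<longrightarrow>
      p x y A B = marg_p X p x A * rum_prob X (t x) y B)"
    using transition_exists[OF CM CSI] by metis
  show ?thesis
    unfolding state_indep_cdru_iff_rum_prob
  proof (intro exI conjI ballI)
    show "\<nu> \<in> distr (lin_orders X)"
      by (rule \<nu>)
    show "t x \<in> distr (lin_orders X)" if "x \<in> X" for x
      using t by blast
    show "p x y A B = rum_prob X \<nu> x A * rum_prob X (t x) y B"
      if "A \<in> nonempty_subsets X" "B \<in> nonempty_subsets X" "x \<in> A" "y \<in> B" for A B x y
      using that t marg_p_eq[of A x] by simp
  qed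
qed

end

theorem theorem6:
  fixes X :: "'a set" and p :: "'a \<Rightarrow> 'a \<Rightarrow> 'a set \<Rightarrow> 'a set \<Rightarrow> real"
  assumes "finite X"
    and "random_joint_choice_rule X p"
  shows "state_indep_cdru X p \<longleftrightarrow>
           complete_monotonicity X p \<and> marginality X p \<and> choice_set_independence X p"
proof
  assume "state_indep_cdru X p"
  with assms(1) show "complete_monotonicity X p \<and> marginality X p \<and> choice_set_independence X p"
    by (rule state_indep_cdru_necessary)
next
  assume axioms: "complete_monotonicity X p \<and> marginality X p \<and> choice_set_independence X p"
  then interpret marginal_joint_choice_rule X p
    using assms by unfold_locales auto
  show "state_indep_cdru X p"
    using axioms by (intro state_indep_cdru_sufficient) blast+
qed

end
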